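(* Let $f<0$, $g<0$ and $\rho\in(0,\tfrac12)$. There is a unique $\omega_+>0$ such that $|\mu_-(i\omega)|>1$ for all $\omega\in(0,\omega_+)$ and $|\mu_-(i\omega)|<1$ for all $\omega>\omega_+$. Moreover $\omega_+$ is the unique positive solution of $|\mu_-(i\omega)|=1$, and $$\omega_+^2=(1-2\rho)|f|\left(\Bigl(1-\frac{|f|}{2g^2}\Bigr)(1-2\rho)+\sqrt{\Bigl(1-\frac{|f|}{2g^2}\Bigr)^2(1-2\rho)^2+\frac{2|f|}{g^2}}\right).$$
   Context: $\gamma(\nu)=\frac{f+g\nu-\nu^2}{f+g\nu}$; $\mu_\pm(\nu)=\frac{1}{2\rho}\left(\gamma(\nu)\pm\sqrt{\gamma(\nu)^2-4\rho(1-\rho)}\right)$, the two roots of $\rho\mu^2-\gamma\mu+(1-\rho)=0$. Branch convention: for $w\neq0$, $\sqrt w$ is the square root of $w$ whose argument lies in $[0,\pi)$ (branch cut along the positive real axis). In the final formula, the square root is the ordinary nonnegative square root of a positive real number. *)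

theory Defs
  imports "HOL-Analysis.Analysis"
begin

text \<open>Square root with branch cut along the positive real axis: for w \<noteq> 0,
  the square root of w whose argument lies in [0, pi).  (Arg ranges over (-pi, pi].)\<close>
definition bsqrt :: "complex \<Rightarrow> complex" where
  "bsqrt w = (if w = 0 then 0 else (THE z. z ^ 2 = w \<and> 0 \<le> Arg z \<and> Arg z < pi))"

definition gam :: "real \<Rightarrow> real \<Rightarrow> complex \<Rightarrow> complex" where
  "gam f g \<nu> = (of_real f + of_real g * \<nu> - \<nu> ^ 2) / (of_real f + of_real g * \<nu>)"

definition mu_minus :: "real \<Rightarrow> real \<Rightarrow> real \<Rightarrow> complex \<Rightarrow> complex" where
  "mu_minus \<rho> f g \<nu> =
     (gam f g \<nu> - bsqrt ((gam f g \<nu>) ^ 2 - 4 * of_real \<rho> * (1 - of_real \<rho>))) / (2 * of_real \<rho>)"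

definition mu_plus :: "real \<Rightarrow> real \<Rightarrow> real \<Rightarrow> complex \<Rightarrow> complex" where
  "mu_plus \<rho> f g \<nu> =
     (gam f g \<nu> + bsqrt ((gam f g \<nu>) ^ 2 - 4 * of_real \<rho> * (1 - of_real \<rho>))) / (2 * of_real \<rho>)"

end

theory Submission
  imports Defs
begin

(*
  Since \<gamma> = \<rho>\<mu> + (1 - \<rho>)/\<mu>, the unit circle |\<mu>| = 1 is mapped
  onto the ellipse  x^2 + y^2/(1 - 2\<rho>)^2 = 1,  and the proof rests on two computations:

  (1) Ellipse criterion.  If Im \<gamma> > 0 and the square root s has Im s \<ge> 0 (as the branch
      bsqrt guarantees), then \<rho>|\<mu>_-|^2 < 1 - \<rho>, and  E(\<gamma>) = Re^2 \<gamma> + Im^2 \<gamma>/(1 - 2\<rho>)^2 - 1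
      equals (1 - |\<mu>_-|^2) times a positive factor.  This follows from a polynomial
      identity in the real and imaginary parts of \<mu>_-.
  (2) On the imaginary axis, E(\<gamma>(i\<omega>)) is a positive multiple of the quadratic
      crossing_poly (t := \<omega>^2), whose only positive root is the stated value \<omega>_+^2.

  Together these give the trichotomy |\<mu>_-(i\<omega>)| >,=,< 1 according as \<omega> <,=,> \<omega>_+,
  from which the uniqueness of the threshold \<omega>_+ is elementary.
*)

lemma Arg_upper_half_iff: "(0 \<le> Arg z \<and> Arg z < pi) \<longleftrightarrow> (0 \<le> Im z \<and> \<not> (Re z < 0 \<and> Im z = 0))"
  using Arg_less_0[of z] Arg_le_pi[of z] Arg_eq_pi[of z] by (auto simp: less_le)

lemma bsqrt_square_Im_nonneg: "bsqrt w ^ 2 = w \<and> 0 \<le> Im (bsqrt w)"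
proof (cases "w = 0")
  case True
  then show ?thesis by (simp add: bsqrt_def)
next
  case False
  define P where "P z \<longleftrightarrow> z ^ 2 = w \<and> 0 \<le> Arg z \<and> Arg z < pi" for z
  text \<open>Of the two square roots \<open>\<pm>csqrt w\<close> at least one lies in the half plane.\<close>
  have exists: "\<exists>z. P z"
  proof (cases "P (csqrt w)")
    case False
    have "csqrt w \<noteq> 0" using \<open>w \<noteq> 0\<close> by simp
    then have "P (- csqrt w)" using False unfolding P_def Arg_upper_half_iff
      by (auto simp: complex_eq_iff)
    then show ?thesis by blast
  qed blast
  have unique: "z = z'" if "P z" "P z'" for z z'
  proof -
    have "(z - z') * (z + z') = 0"
      using that by (simp add: P_def algebra_simps power2_eq_square)
    then have "z = z' \<or> z = - z'" by (auto simp: add_eq_0_iff)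
    moreover have "z \<noteq> 0" using that \<open>w \<noteq> 0\<close> by (auto simp: P_def)
    ultimately show ?thesis using that unfolding P_def Arg_upper_half_iff
      by (auto simp: complex_eq_iff)
  qed
  have "P (THE z. P z)" using exists unique by (metis theI)
  then show ?thesis using False by (simp add: bsqrt_def P_def[symmetric]) (simp add: P_def Arg_upper_half_iff)
qed

lemma quadratic_formula_root:
  fixes \<rho> :: real and \<gamma> s :: complex
  assumes "\<rho> \<noteq> 0" and "s^2 = \<gamma>^2 - 4 * of_real \<rho> * (1 - of_real \<rho>)"
  shows "of_real \<rho> * ((\<gamma> + s) / (2 * of_real \<rho>))^2 - \<gamma> * ((\<gamma> + s) / (2 * of_real \<rho>))
           + (1 - of_real \<rho>) = 0"
proof -
  have "4 * of_real \<rho> * (of_real \<rho> * ((\<gamma> + s) / (2 * of_real \<rho>))^2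
          - \<gamma> * ((\<gamma> + s) / (2 * of_real \<rho>)) + (1 - of_real \<rho>))
        = s^2 - (\<gamma>^2 - 4 * of_real \<rho> * (1 - of_real \<rho>))"
    using assms(1) by (simp add: field_simps power2_eq_square)
  then show ?thesis using assms by simp
qed

text \<open>Multiplying the equation by \<open>cnj \<mu>\<close> gives
  \<open>\<gamma>|\<mu>|^2 = \<rho>|\<mu>|^2\<mu> + (1 - \<rho>) cnj \<mu>\<close>, i.e. real and imaginary parts of \<gamma> in terms of \<mu>.\<close>

lemma quadratic_root_re_im:
  fixes \<rho> :: real and \<gamma> \<mu> :: complex
  assumes root: "of_real \<rho> * \<mu>^2 - \<gamma> * \<mu> + (1 - of_real \<rho>) = 0"
  shows "Re \<gamma> * (cmod \<mu>)^2 = Re \<mu> * (\<rho> * (cmod \<mu>)^2 + (1 - \<rho>))"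
    and "Im \<gamma> * (cmod \<mu>)^2 = Im \<mu> * (\<rho> * (cmod \<mu>)^2 - (1 - \<rho>))"
proof -
  have "cnj \<mu> * (of_real \<rho> * \<mu>^2 - \<gamma> * \<mu> + (1 - of_real \<rho>)) = 0"
    using root by simp
  then have "\<gamma> * (\<mu> * cnj \<mu>) = of_real \<rho> * (\<mu> * cnj \<mu>) * \<mu> + of_real (1 - \<rho>) * cnj \<mu>"
    by (simp add: algebra_simps power2_eq_square)
  then have conj_form: "\<gamma> * of_real ((cmod \<mu>)^2)
      = of_real (\<rho> * (cmod \<mu>)^2) * \<mu> + of_real (1 - \<rho>) * cnj \<mu>"
    by (simp only: complex_norm_square of_real_mult)
  show "Re \<gamma> * (cmod \<mu>)^2 = Re \<mu> * (\<rho> * (cmod \<mu>)^2 + (1 - \<rho>))"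
    using arg_cong[OF conj_form, of Re] by (simp add: algebra_simps)
  show "Im \<gamma> * (cmod \<mu>)^2 = Im \<mu> * (\<rho> * (cmod \<mu>)^2 - (1 - \<rho>))"
    using arg_cong[OF conj_form, of Im] by (simp add: algebra_simps)
qed

text \<open>The root taken with \<open>-s\<close> is the one inside the circle \<open>\<rho>|\<mu>|^2 = 1 - \<rho>\<close>: the other
  root \<nu> has \<open>Im \<nu> > 0\<close>, hence lies outside by the previous lemma, and \<open>|\<mu>||\<nu>| = (1 - \<rho>)/\<rho>\<close>.\<close>

lemma small_root_modulus:
  fixes \<rho> :: real and \<gamma> s :: complex
  assumes \<rho>_pos: "0 < \<rho>" and \<rho>_lt1: "\<rho> < 1" and Im_\<gamma>: "Im \<gamma> > 0"
    and s_sq: "s^2 = \<gamma>^2 - 4 * of_real \<rho> * (1 - of_real \<rho>)" and Im_s: "Im s \<ge> 0"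
  defines "\<mu> \<equiv> (\<gamma> - s) / (2 * of_real \<rho>)"
  shows "0 < cmod \<mu>" and "\<rho> * (cmod \<mu>)^2 < 1 - \<rho>"
proof -
  define \<nu> where "\<nu> = (\<gamma> + s) / (2 * of_real \<rho>)"
  have \<nu>_root: "of_real \<rho> * \<nu>^2 - \<gamma> * \<nu> + (1 - of_real \<rho>) = 0"
    unfolding \<nu>_def using quadratic_formula_root \<rho>_pos s_sq by simp
  have "\<mu> * \<nu> = (\<gamma>^2 - s^2) / (4 * (of_real \<rho>)^2)"
    by (simp add: \<mu>_def \<nu>_def field_simps power2_eq_square)
  also have "\<dots> = of_real ((1 - \<rho>) / \<rho>)"
    unfolding s_sq using \<rho>_pos by (simp add: field_simps power2_eq_square)
  finally have "cmod \<mu> * cmod \<nu> = \<bar>(1 - \<rho>) / \<rho>\<bar>"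
    by (metis norm_mult norm_of_real)
  then have norm_prod: "cmod \<mu> * cmod \<nu> = (1 - \<rho>) / \<rho>"
    using \<rho>_pos \<rho>_lt1 by simp
  show "0 < cmod \<mu>"
    using norm_prod \<rho>_pos \<rho>_lt1 by (cases "\<mu> = 0") auto
  have Im_\<nu>: "Im \<nu> > 0"
    using \<rho>_pos Im_\<gamma> Im_s by (simp add: \<nu>_def Im_divide_of_real)
  have \<nu>_outside: "\<rho> * (cmod \<nu>)^2 > 1 - \<rho>"
  proof -
    have "cmod \<nu> > 0" using Im_\<nu> by auto
    then have "Im \<gamma> * (cmod \<nu>)^2 > 0" using Im_\<gamma> by simp
    then have "Im \<nu> * (\<rho> * (cmod \<nu>)^2 - (1 - \<rho>)) > 0"
      unfolding quadratic_root_re_im(2)[OF \<nu>_root] .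
    then show ?thesis using Im_\<nu> by (simp add: zero_less_mult_iff)
  qed
  have "(\<rho> * (cmod \<mu>)^2) * (\<rho> * (cmod \<nu>)^2) = (\<rho> * (cmod \<mu> * cmod \<nu>))^2"
    by (simp add: algebra_simps power2_eq_square)
  also have "\<dots> = (1 - \<rho>) * (1 - \<rho>)" unfolding norm_prod using \<rho>_pos by (simp add: power2_eq_square)
  finally have product: "(\<rho> * (cmod \<mu>)^2) * (\<rho> * (cmod \<nu>)^2) = (1 - \<rho>) * (1 - \<rho>)" .
  show "\<rho> * (cmod \<mu>)^2 < 1 - \<rho>"
  proof (rule ccontr)
    assume "\<not> \<rho> * (cmod \<mu>)^2 < 1 - \<rho>"
    then have "(1 - \<rho>) * (1 - \<rho>) < (\<rho> * (cmod \<mu>)^2) * (\<rho> * (cmod \<nu>)^2)"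
      using \<nu>_outside \<rho>_lt1 by (intro mult_le_less_imp_less) auto
    then show False using product by simp
  qed
qed

text \<open>The key polynomial identity: if \<open>a + ib = \<rho>\<mu> + (1 - \<rho>)/\<mu>\<close> with \<open>\<mu> = x + iy\<close> and
  \<open>u = |\<mu>|^2\<close>, then the ellipse expression factors through \<open>1 - u\<close>.\<close>

lemma ellipse_identity:
  fixes x y u a b \<rho> :: real
  assumes u: "u = x^2 + y^2"
    and a: "a * u = x * (\<rho> * u + (1 - \<rho>))" and b: "b * u = y * (\<rho> * u - (1 - \<rho>))"
    and \<rho>: "\<rho> \<noteq> 1/2"
  shows "(a^2 + b^2 / (1 - 2*\<rho>)^2 - 1) * u^2
       = (1 - u) * ((1 - \<rho>)^2 - \<rho>^2 * u) * (u + 4 * \<rho> * (1 - \<rho>) * y^2 / (1 - 2*\<rho>)^2)"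
proof -
  have k: "1 - 2*\<rho> \<noteq> 0" using \<rho> by auto
  have "(a^2 + b^2 / (1 - 2*\<rho>)^2 - 1) * u^2 = (a*u)^2 + (b*u)^2 / (1 - 2*\<rho>)^2 - u^2"
    by (simp add: field_simps power2_eq_square)
  also have "\<dots> = (u - y^2) * (\<rho> * u + (1 - \<rho>))^2
                   + y^2 * (\<rho> * u - (1 - \<rho>))^2 / (1 - 2*\<rho>)^2 - u^2"
    unfolding a b using u by (simp add: power_mult_distrib)
  also have "\<dots> = (1 - u) * ((1 - \<rho>)^2 - \<rho>^2 * u) * (u + 4 * \<rho> * (1 - \<rho>) * y^2 / (1 - 2*\<rho>)^2)"
    using k by (simp add: field_simps) (simp add: algebra_simps power2_eq_square)
  finally show ?thesis .
qed

text \<open>Ellipse criterion: for Im \<gamma> > 0 the small root is inside the unit circle exactly when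
  \<gamma> lies outside the ellipse  \<open>x^2 + y^2/(1 - 2\<rho>)^2 = 1\<close>, quantitatively.\<close>

lemma ellipse_criterion:
  fixes \<rho> :: real and \<gamma> s :: complex
  assumes \<rho>_pos: "0 < \<rho>" and \<rho>_lt: "\<rho> < 1/2" and Im_\<gamma>: "Im \<gamma> > 0"
    and s_sq: "s^2 = \<gamma>^2 - 4 * of_real \<rho> * (1 - of_real \<rho>)" and Im_s: "Im s \<ge> 0"
  shows "\<exists>C>0. (Re \<gamma>)^2 + (Im \<gamma>)^2 / (1 - 2*\<rho>)^2 - 1
              = (1 - (cmod ((\<gamma> - s) / (2 * of_real \<rho>)))^2) * C"
proof -
  define \<mu> where "\<mu> = (\<gamma> - s) / (2 * of_real \<rho>)"
  define u where "u = (cmod \<mu>)^2"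
  have \<mu>_root: "of_real \<rho> * \<mu>^2 - \<gamma> * \<mu> + (1 - of_real \<rho>) = 0"
    using quadratic_formula_root[of \<rho> "- s" \<gamma>] \<rho>_pos s_sq by (simp add: \<mu>_def)
  have u_pos: "u > 0" and u_small: "\<rho> * u < 1 - \<rho>"
    using small_root_modulus[OF \<rho>_pos _ Im_\<gamma> s_sq Im_s] \<rho>_lt by (simp_all add: u_def \<mu>_def)
  have identity: "((Re \<gamma>)^2 + (Im \<gamma>)^2 / (1 - 2*\<rho>)^2 - 1) * u^2
      = (1 - u) * ((1 - \<rho>)^2 - \<rho>^2 * u) * (u + 4 * \<rho> * (1 - \<rho>) * (Im \<mu>)^2 / (1 - 2*\<rho>)^2)"
    using quadratic_root_re_im[OF \<mu>_root] \<rho>_lt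
    by (intro ellipse_identity[where x = "Re \<mu>" and y = "Im \<mu>"]) (simp_all add: u_def cmod_power2)
  define C where "C = ((1 - \<rho>)^2 - \<rho>^2 * u)
                     * (u + 4 * \<rho> * (1 - \<rho>) * (Im \<mu>)^2 / (1 - 2*\<rho>)^2) / u^2"
  have "\<rho>^2 * u < \<rho> * (1 - \<rho>)" using u_small \<rho>_pos by (simp add: power2_eq_square)
  also have "\<dots> < (1 - \<rho>)^2" using \<rho>_pos \<rho>_lt by (simp add: power2_eq_square)
  finally have "C > 0" unfolding C_def using u_pos \<rho>_pos \<rho>_lt by (simp add: add_pos_nonneg)
  moreover have "(Re \<gamma>)^2 + (Im \<gamma>)^2 / (1 - 2*\<rho>)^2 - 1 = (1 - u) * C"
    using identity u_pos unfolding C_def by (simp add: field_simps)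
  ultimately show ?thesis unfolding u_def \<mu>_def by blast
qed

lemma gam_imaginary_axis:
  fixes f g \<omega> :: real
  assumes "f \<noteq> 0"
  defines "D \<equiv> f^2 + g^2 * \<omega>^2"
  shows "Re (gam f g (\<i> * of_real \<omega>)) = 1 + f * \<omega>^2 / D"
    and "Im (gam f g (\<i> * of_real \<omega>)) = - g * \<omega>^3 / D"
proof -
  have D_pos: "D > 0" using assms unfolding D_def by (intro add_pos_nonneg) auto
  have "(of_real f + of_real g * (\<i> * of_real \<omega>) :: complex) \<noteq> 0"
    using assms by (auto simp: complex_eq_iff)
  then have "gam f g (\<i> * of_real \<omega>) = 1 + of_real (\<omega>^2) / (of_real f + of_real g * (\<i> * of_real \<omega>))"
    unfolding gam_def by (simp add: field_simps power2_eq_square)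
  also have "\<dots> = Complex (1 + f * \<omega>^2 / D) (- g * \<omega>^3 / D)"
    using D_pos by (simp add: complex_eq_iff Re_divide Im_divide D_def
                              power2_eq_square power3_eq_cube field_simps)
  finally show "Re (gam f g (\<i> * of_real \<omega>)) = 1 + f * \<omega>^2 / D"
    and "Im (gam f g (\<i> * of_real \<omega>)) = - g * \<omega>^3 / D" by simp_all
qed

text \<open>The quadratic in \<open>t = \<omega>^2\<close> whose sign is that of the ellipse expression at \<open>\<gamma>(i\<omega>)\<close>.\<close>

definition crossing_poly :: "real \<Rightarrow> real \<Rightarrow> real \<Rightarrow> real \<Rightarrow> real" where
  "crossing_poly \<rho> f g t = g^2 * t^2 + (1 - 2*\<rho>)^2 * (2*f*g^2 + f^2) * t + 2 * (1 - 2*\<rho>)^2 * f^3"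

lemma ellipse_at_gam_imaginary_axis:
  fixes f g \<omega> \<rho> :: real
  assumes "f \<noteq> 0" "\<rho> \<noteq> 1/2"
  defines "D \<equiv> f^2 + g^2 * \<omega>^2"
  shows "(1 + f * \<omega>^2 / D)^2 + (- g * \<omega>^3 / D)^2 / (1 - 2*\<rho>)^2 - 1
         = \<omega>^2 * crossing_poly \<rho> f g (\<omega>^2) / ((1 - 2*\<rho>)^2 * D^2)"
proof -
  have "D > 0" using assms unfolding D_def by (intro add_pos_nonneg) auto
  moreover have "1 - 2*\<rho> \<noteq> 0" using assms by simp
  ultimately show ?thesis unfolding crossing_poly_def
    by (simp add: field_simps) (simp add: D_def algebra_simps eval_nat_numeral)
qed

lemma crossing_poly_sign:
  fixes f g \<rho> \<omega> :: real
  assumes f: "f < 0" and g: "g < 0" and \<rho>_pos: "0 < \<rho>" and \<rho>_lt: "\<rho> < 1/2" and \<omega>: "\<omega> > 0"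
  shows "\<exists>C>0. crossing_poly \<rho> f g (\<omega>^2) = (1 - (cmod (mu_minus \<rho> f g (\<i> * of_real \<omega>)))^2) * C"
proof -
  define \<gamma> where "\<gamma> = gam f g (\<i> * of_real \<omega>)"
  define s where "s = bsqrt (\<gamma>^2 - 4 * of_real \<rho> * (1 - of_real \<rho>))"
  define D where "D = f^2 + g^2 * \<omega>^2"
  have f_ne: "f \<noteq> 0" and \<rho>_ne: "\<rho> \<noteq> 1/2" using f \<rho>_lt by simp_all
  have D_pos: "D > 0" using f unfolding D_def by (intro add_pos_nonneg) auto
  have Re_\<gamma>: "Re \<gamma> = 1 + f * \<omega>^2 / D" and Im_\<gamma>: "Im \<gamma> = - g * \<omega>^3 / D"
    using gam_imaginary_axis[OF f_ne, of g \<omega>] by (simp_all add: \<gamma>_def D_def)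
  have "Im \<gamma> > 0" unfolding Im_\<gamma> using g \<omega> D_pos by (simp add: divide_neg_pos mult_neg_pos)
  then obtain C where C: "C > 0" "(Re \<gamma>)^2 + (Im \<gamma>)^2 / (1 - 2*\<rho>)^2 - 1
              = (1 - (cmod ((\<gamma> - s) / (2 * of_real \<rho>)))^2) * C"
    using ellipse_criterion[OF \<rho>_pos \<rho>_lt, of \<gamma> s] bsqrt_square_Im_nonneg unfolding s_def by blast
  define K where "K = (1 - 2*\<rho>)^2 * D^2 / \<omega>^2"
  have K_pos: "K > 0" unfolding K_def using D_pos \<omega> \<rho>_lt by simp
  have "crossing_poly \<rho> f g (\<omega>^2) = ((Re \<gamma>)^2 + (Im \<gamma>)^2 / (1 - 2*\<rho>)^2 - 1) * K"
    unfolding Re_\<gamma> Im_\<gamma> ellipse_at_gam_imaginary_axis[OF f_ne \<rho>_ne, of \<omega> g, folded D_def] K_def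
    using D_pos \<omega> \<rho>_lt by (simp add: field_simps)
  also have "\<dots> = (1 - (cmod (mu_minus \<rho> f g (\<i> * of_real \<omega>)))^2) * (C * K)"
    unfolding C(2) by (simp add: mu_minus_def \<gamma>_def s_def)
  finally show ?thesis using C(1) K_pos by (intro exI[of _ "C * K"]) simp
qed

definition omega_plus_sq :: "real \<Rightarrow> real \<Rightarrow> real \<Rightarrow> real" where
  "omega_plus_sq \<rho> f g = (1 - 2 * \<rho>) * \<bar>f\<bar> *
     ((1 - \<bar>f\<bar> / (2 * g ^ 2)) * (1 - 2 * \<rho>)
      + sqrt ((1 - \<bar>f\<bar> / (2 * g ^ 2)) ^ 2 * (1 - 2 * \<rho>) ^ 2 + 2 * \<bar>f\<bar> / g ^ 2))"

text \<open>With \<open>k = 1 - 2\<rho>\<close>, \<open>F = |f|\<close>, \<open>\<alpha> = 1 - F/(2g^2)\<close> and \<open>S = sqrt((\<alpha>k)^2 + 2F/g^2)\<close>,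
  the roots of crossing_poly are \<open>kF(\<alpha>k \<pm> S)\<close>; since \<open>S > |\<alpha>k|\<close> one is positive and one
  negative.\<close>

lemma crossing_poly_factor:
  fixes f g \<rho> :: real
  assumes f: "f < 0" and g: "g \<noteq> 0" and \<rho>: "\<rho> < 1/2"
  shows "0 < omega_plus_sq \<rho> f g"
    and "\<exists>T'<0. \<forall>t. crossing_poly \<rho> f g t = g^2 * (t - omega_plus_sq \<rho> f g) * (t - T')"
proof -
  define F where "F = - f"
  define k where "k = 1 - 2*\<rho>"
  define \<alpha> where "\<alpha> = 1 - F / (2 * g^2)"
  define Z where "Z = \<alpha>^2 * k^2 + 2 * F / g^2"
  define S where "S = sqrt Z"
  define T where "T = omega_plus_sq \<rho> f g"
  define T' where "T' = k * F * (\<alpha> * k - S)"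
  have F_pos: "F > 0" and k_pos: "k > 0" and g2_pos: "g^2 > 0"
    using f g \<rho> by (auto simp: F_def k_def)
  have T_eq: "T = k * F * (\<alpha> * k + S)"
    unfolding T_def omega_plus_sq_def S_def Z_def \<alpha>_def k_def F_def using f by simp
  have Z_gt: "Z > (\<alpha> * k)^2" unfolding Z_def using F_pos g2_pos by (simp add: power_mult_distrib)
  then have "0 \<le> Z" using zero_le_power2[of "\<alpha> * k"] by linarith
  then have S_sq: "S^2 = Z" unfolding S_def by simp
  have "sqrt ((\<alpha> * k)^2) < S" unfolding S_def using Z_gt by (simp only: real_sqrt_less_iff)
  then have S_gt: "S > \<bar>\<alpha> * k\<bar>" by simp
  show "0 < omega_plus_sq \<rho> f g" using F_pos k_pos S_gt by (simp add: T_eq[unfolded T_def])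
  have "T' < 0" unfolding T'_def using F_pos k_pos S_gt by (intro mult_pos_neg) auto
  moreover have "crossing_poly \<rho> f g t = g^2 * (t - T) * (t - T')" for t
  proof -
    have "g^2 * (t - T) * (t - T') = g^2 * t^2 - g^2 * (T + T') * t + g^2 * (T * T')"
      by (simp add: algebra_simps power2_eq_square)
    also have "T + T' = 2 * k^2 * F * \<alpha>"
      unfolding T_eq T'_def by (simp add: algebra_simps power2_eq_square)
    also have "T * T' = k^2 * F^2 * ((\<alpha> * k)^2 - S^2)"
      unfolding T_eq T'_def by (simp add: algebra_simps power2_eq_square)
    also have "(\<alpha> * k)^2 - S^2 = - 2 * F / g^2"
      unfolding S_sq Z_def by (simp add: power_mult_distrib)
    also have "g^2 * t^2 - g^2 * (2 * k^2 * F * \<alpha>) * t + g^2 * (k^2 * F^2 * (- 2 * F / g^2))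
               = crossing_poly \<rho> f g t"
      unfolding crossing_poly_def F_def \<alpha>_def k_def using g2_pos
      by (simp add: field_simps) (simp add: algebra_simps power2_eq_square power3_eq_cube)
    finally show ?thesis by simp
  qed
  ultimately show "\<exists>T'<0. \<forall>t. crossing_poly \<rho> f g t = g^2 * (t - omega_plus_sq \<rho> f g) * (t - T')"
    unfolding T_def by blast
qed

lemma modulus_sign:
  fixes f g \<rho> \<omega> :: real
  assumes f: "f < 0" and g: "g < 0" and \<rho>_pos: "0 < \<rho>" and \<rho>_lt: "\<rho> < 1/2" and \<omega>: "\<omega> > 0"
  shows "sgn (1 - cmod (mu_minus \<rho> f g (\<i> * of_real \<omega>))) = sgn (\<omega> - sqrt (omega_plus_sq \<rho> f g))"
proof -
  define m where "m = cmod (mu_minus \<rho> f g (\<i> * of_real \<omega>))"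
  define \<omega>\<^sub>p where "\<omega>\<^sub>p = sqrt (omega_plus_sq \<rho> f g)"
  define P where "P = crossing_poly \<rho> f g (\<omega>^2)"
  obtain C where C: "C > 0" "P = (1 - m^2) * C"
    using crossing_poly_sign[OF f g \<rho>_pos \<rho>_lt \<omega>] unfolding m_def P_def by blast
  have g_ne: "g \<noteq> 0" using g by simp
  obtain T' where T': "T' < 0" "\<forall>t. crossing_poly \<rho> f g t = g^2 * (t - omega_plus_sq \<rho> f g) * (t - T')"
    using crossing_poly_factor(2)[OF f g_ne \<rho>_lt] by blast
  have \<omega>\<^sub>p_pos: "0 < \<omega>\<^sub>p" and "\<omega>\<^sub>p^2 = omega_plus_sq \<rho> f g"
    using crossing_poly_factor(1)[OF f g_ne \<rho>_lt] by (simp_all add: \<omega>\<^sub>p_def)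
  then have "P = g^2 * (\<omega>^2 - \<omega>\<^sub>p^2) * (\<omega>^2 - T')"
    using T'(2) unfolding P_def by simp
  then have P_factor: "P = (\<omega> - \<omega>\<^sub>p) * (g^2 * (\<omega> + \<omega>\<^sub>p) * (\<omega>^2 - T'))"
    by (simp add: power2_eq_square algebra_simps)
  have "\<omega>^2 - T' > 0" using T'(1) zero_le_power2[of \<omega>] by linarith
  then have "g^2 * (\<omega> + \<omega>\<^sub>p) * (\<omega>^2 - T') > 0"
    using g_ne \<omega> \<omega>\<^sub>p_pos by simp
  then have sgn_root: "sgn P = sgn (\<omega> - \<omega>\<^sub>p)"
    by (simp only: P_factor sgn_mult[of "\<omega> - \<omega>\<^sub>p"] sgn_pos mult_1_right)
  have P_circle: "P = (1 - m) * ((1 + m) * C)"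
    using C(2) by (simp add: power2_eq_square algebra_simps)
  have "(1 + m) * C > 0" using C(1) by (simp add: m_def add_pos_nonneg)
  then have sgn_circle: "sgn P = sgn (1 - m)"
    by (simp only: P_circle sgn_mult[of "1 - m"] sgn_pos mult_1_right)
  show ?thesis using sgn_root sgn_circle unfolding m_def \<omega>\<^sub>p_def by simp
qed

lemma threshold_unique:
  fixes m :: "real \<Rightarrow> real" and w\<^sub>0 :: real
  assumes w\<^sub>0_pos: "0 < w\<^sub>0"
    and sign: "\<And>\<omega>. 0 < \<omega> \<Longrightarrow> sgn (1 - m \<omega>) = sgn (\<omega> - w\<^sub>0)"
  shows "(0 < w \<and> (\<forall>\<omega>. 0 < \<omega> \<and> \<omega> < w \<longrightarrow> 1 < m \<omega>) \<and> (\<forall>\<omega>. w < \<omega> \<longrightarrow> m \<omega> < 1))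
         \<longleftrightarrow> w = w\<^sub>0"
proof -
  have above: "1 < m \<omega> \<longleftrightarrow> \<omega> < w\<^sub>0" and below: "m \<omega> < 1 \<longleftrightarrow> w\<^sub>0 < \<omega>" if "0 < \<omega>" for \<omega>
    using sign[OF that] by (metis sgn_less diff_less_0_iff_less, metis sgn_greater diff_gt_0_iff_gt)
  show ?thesis
  proof
    assume threshold: "0 < w \<and> (\<forall>\<omega>. 0 < \<omega> \<and> \<omega> < w \<longrightarrow> 1 < m \<omega>) \<and> (\<forall>\<omega>. w < \<omega> \<longrightarrow> m \<omega> < 1)"
    text \<open>Otherwise the midpoint of \<open>w\<close> and \<open>w\<^sub>0\<close> is classified differently by the two.\<close>
    show "w = w\<^sub>0"
    proof (rule linorder_cases[of w w\<^sub>0])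
      assume "w < w\<^sub>0"
      then have "0 < (w + w\<^sub>0) / 2" "w < (w + w\<^sub>0) / 2" "(w + w\<^sub>0) / 2 < w\<^sub>0"
        using threshold by simp_all
      then show ?thesis using threshold above by fastforce
    next
      assume "w\<^sub>0 < w"
      then have "0 < (w + w\<^sub>0) / 2" "(w + w\<^sub>0) / 2 < w" "w\<^sub>0 < (w + w\<^sub>0) / 2"
        using w\<^sub>0_pos by simp_all
      then show ?thesis using threshold below by fastforce
    qed
  qed (use w\<^sub>0_pos above below in auto)
qed

theorem mainTheorem11:
  fixes f g \<rho> :: real
  assumes "f < 0" and "g < 0" and "0 < \<rho>" and "\<rho> < 1/2"
  shows "(\<exists>!wp::real. 0 < wp \<and>
            (\<forall>\<omega>. 0 < \<omega> \<and> \<omega> < wp \<longrightarrow> cmod (mu_minus \<rho> f g (\<i> * of_real \<omega>)) > 1) \<and>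
            (\<forall>\<omega>. \<omega> > wp \<longrightarrow> cmod (mu_minus \<rho> f g (\<i> * of_real \<omega>)) < 1))
       \<and> (\<forall>wp::real. (0 < wp \<and>
            (\<forall>\<omega>. 0 < \<omega> \<and> \<omega> < wp \<longrightarrow> cmod (mu_minus \<rho> f g (\<i> * of_real \<omega>)) > 1) \<and>
            (\<forall>\<omega>. \<omega> > wp \<longrightarrow> cmod (mu_minus \<rho> f g (\<i> * of_real \<omega>)) < 1))
          \<longrightarrow> (\<forall>\<omega>. 0 < \<omega> \<longrightarrow> (cmod (mu_minus \<rho> f g (\<i> * of_real \<omega>)) = 1 \<longleftrightarrow> \<omega> = wp))
            \<and> wp ^ 2 = (1 - 2 * \<rho>) * \<bar>f\<bar> *
                 ((1 - \<bar>f\<bar> / (2 * g ^ 2)) * (1 - 2 * \<rho>)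
                  + sqrt ((1 - \<bar>f\<bar> / (2 * g ^ 2)) ^ 2 * (1 - 2 * \<rho>) ^ 2 + 2 * \<bar>f\<bar> / g ^ 2)))"
proof -
  define \<omega>\<^sub>p where "\<omega>\<^sub>p = sqrt (omega_plus_sq \<rho> f g)"
  have "0 < omega_plus_sq \<rho> f g" using crossing_poly_factor(1) assms by simp
  then have \<omega>\<^sub>p_pos: "0 < \<omega>\<^sub>p" and \<omega>\<^sub>p_sq: "\<omega>\<^sub>p ^ 2 = omega_plus_sq \<rho> f g"
    by (simp_all add: \<omega>\<^sub>p_def)
  have sign: "sgn (1 - cmod (mu_minus \<rho> f g (\<i> * of_real \<omega>))) = sgn (\<omega> - \<omega>\<^sub>p)" if "0 < \<omega>" for \<omega>
    using modulus_sign[OF assms that] by (simp add: \<omega>\<^sub>p_def)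
  then have on_circle: "cmod (mu_minus \<rho> f g (\<i> * of_real \<omega>)) = 1 \<longleftrightarrow> \<omega> = \<omega>\<^sub>p" if "0 < \<omega>" for \<omega>
    using that by (metis sgn_0_0 eq_iff_diff_eq_0)
  have "(0 < wp \<and>
            (\<forall>\<omega>. 0 < \<omega> \<and> \<omega> < wp \<longrightarrow> cmod (mu_minus \<rho> f g (\<i> * of_real \<omega>)) > 1) \<and>
            (\<forall>\<omega>. \<omega> > wp \<longrightarrow> cmod (mu_minus \<rho> f g (\<i> * of_real \<omega>)) < 1)) \<longleftrightarrow> wp = \<omega>\<^sub>p" for wp
    using threshold_unique[OF \<omega>\<^sub>p_pos, of "\<lambda>\<omega>. cmod (mu_minus \<rho> f g (\<i> * of_real \<omega>))"] sign by simp
  then show ?thesis using on_circle \<omega>\<^sub>p_sq by (simp add: omega_plus_sq_def)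
qed

end
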